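(* Let $F(t)=\sum_{j\ge0}a_jt^{j+1}$ be a formal power series with $a_0=1$, let $(b_n)_{n\ge1}$ be real numbers, $\mathbf b=(b_1,b_2,\dots)$, and $G(t)=\sum_{n\ge1}b_n\frac{t^n}{n!}$. Define $$Q(t)=\tfrac12\frac{d}{dt}\bigl(F(t)^2\bigr),\qquad P(t)=\int_0^t\bigl(F'(u)\bigr)^2\,du .$$ Then: (i) the recurrence $$0=\sum_{k=1}^{n}B_{n,k}(\mathbf b)\,\frac{(k-1)!}{2}\sum_{j=0}^{k-1}a_ja_{k-1-j}\bigl[2n(j+1)(k-j)-k(k+1)\bigr]\quad\text{for all }n\ge1$$ holds if and only if $t\,\frac{d}{dt}P(G(t))-Q(G(t))=0$; and (ii) the recurrence $$0=\sum_{k=1}^{n}\sum_{j=0}^{k-1}a_ja_{k-1-j}(j+1)(k-j)\frac{(k-1)!}{2k}\sum_{s=1}^{n}\frac{b_s}{s!(n-s)!}B_{n-s,k-1}(\mathbf b)\bigl(ks(s-1)+n(n-1)\bigr)\quad\text{for all }n\ge1$$ holds if and only if $\frac{d^2}{dt^2}P(G(t))+G''(t)\,P'(G(t))=0$.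
   Context: $B_{n,k}(x_1,x_2,\dots)$ denotes the partial Bell polynomial: the sum over set partitions $\{P_1,\dots,P_k\}$ of $\{1,\dots,n\}$ into $k$ nonempty blocks of $x_{|P_1|}\cdots x_{|P_k|}$ (with $B_{0,0}=1$, $B_{n,0}=0$ for $n>0$). All series are formal power series; $P'$ denotes the derivative of $P$ as a series in its argument. (Context: $F$ is a point field diffeomorphism applied to a free scalar field, and $b_n$ is the sum of on-shell tree-level amplitudes of rooted trees with $n$ on-shell legs and one off-shell propagator leg; the two recurrences are the $m^2$-part and dot-product part of the tree-level recursion.) *)

theory Defs
  imports "HOL-Computational_Algebra.Formal_Power_Series" "HOL-Library.Disjoint_Sets"
begin

definition bell_poly :: "nat \<Rightarrow> nat \<Rightarrow> (nat \<Rightarrow> real) \<Rightarrow> real" where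
  "bell_poly n k x =
     (\<Sum>P\<in>{P. partition_on {1..n} P \<and> card P = k}. \<Prod>B\<in>P. x (card B))"

end

(* By the exponential formula, B_{n,k}(b) = n!/k! [t^n] G(t)^k.  We prove it for partitions of an
   arbitrary finite set by induction on its size: splitting off the block of a fixed point gives the
   same binomial recurrence that (G^(k+1))' = (k+1) G' G^k gives for the coefficients of the powers
   of G.  Since [t^k] P = [t^(k-1)] F'^2 / k and [t^k] Q = (k+1)/2 [t^(k+1)] F^2 are the inner
   sums over j, the n-th recurrence of (i) is n! times the n-th coefficient of t (P o G)' - Q o G,
   and the n-th recurrence of (ii) is half the n-th coefficient of t^2 ((P o G)'' + G'' (P' o G)),
   the terms with s(s-1) assembling t^2 G'' G^(k-1).  Both series have vanishing constant term,
   and t^2 is not a zero divisor. *)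

theory Submission
  imports Defs
begin

unbundle fps_syntax

section \<open>Partial Bell polynomials over a finite set\<close>

definition set_partitions :: "'a set \<Rightarrow> nat \<Rightarrow> 'a set set set" where
  "set_partitions A k = {P. partition_on A P \<and> card P = k}"

definition bell_on :: "'a set \<Rightarrow> nat \<Rightarrow> (nat \<Rightarrow> 'b::comm_semiring_1) \<Rightarrow> 'b" where
  "bell_on A k x = (\<Sum>P\<in>set_partitions A k. \<Prod>B\<in>P. x (card B))"

lemma bell_poly_eq_bell_on: "bell_poly n k x = bell_on {1..n} k x"
  by (simp add: bell_poly_def bell_on_def set_partitions_def)

lemma finite_set_partitions: "finite A \<Longrightarrow> finite (set_partitions A k)"
  unfolding set_partitions_def
  by (rule finite_subset[OF _ finitely_many_partition_on]) auto

lemma bell_on_0: "finite A \<Longrightarrow> bell_on A 0 x = (if A = {} then 1 else 0)"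
proof -
  assume "finite A"
  then have "set_partitions A 0 = (if A = {} then {{}} else {})"
    by (auto simp: set_partitions_def partition_on_def dest: finite_elements)
  then show ?thesis by (simp add: bell_on_def)
qed

lemma bell_on_empty_Suc: "bell_on {} (Suc k) x = 0"
proof -
  have "set_partitions {} (Suc k) = {}"
    by (auto simp: set_partitions_def partition_on_empty)
  then show ?thesis
    unfolding bell_on_def by (metis sum.empty)
qed

lemma partition_on_insert_block:
  assumes "a \<notin> A" "S \<subseteq> A" "partition_on (A - S) P"
  shows "partition_on (insert a A) (insert (insert a S) P)" and "insert a S \<notin> P"
proof -
  have "\<Union>P = A - S" using assms(3) by (simp add: partition_on_def)
  then have "disjnt (insert a S) (\<Union>P)" and "insert a A - insert a S = A - S"
    using assms(1) by (auto simp: disjnt_def)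
  then show "partition_on (insert a A) (insert (insert a S) P)"
    using partition_on_insert[of "insert a S" P "insert a A"] assms(2,3) by auto
  show "insert a S \<notin> P" using \<open>\<Union>P = A - S\<close> assms(1) by blast
qed

lemma bij_betw_set_partitions_insert:
  assumes "finite A" "a \<notin> A"
  shows "bij_betw (\<lambda>(S, P). insert (insert a S) P)
           (SIGMA S:Pow A. set_partitions (A - S) k) (set_partitions (insert a A) (Suc k))"
    (is "bij_betw ?h ?D _")
proof (rule bij_betw_imageI)
  show "inj_on ?h ?D"
  proof (rule inj_onI, clarsimp simp: set_partitions_def)
    fix S1 P1 S2 P2
    assume S: "S1 \<subseteq> A" "S2 \<subseteq> A" and P: "partition_on (A - S1) P1" "partition_on (A - S2) P2"
      and eq: "insert (insert a S1) P1 = insert (insert a S2) P2"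
    have notin: "insert a S1 \<notin> P1" "insert a S2 \<notin> P2"
      using partition_on_insert_block(2)[OF assms(2)] S P by simp_all
    have "a \<notin> \<Union>P2"
      using P(2) assms(2) by (simp add: partition_on_def)
    moreover have "insert a S1 \<in> insert (insert a S2) P2"
      using eq by (metis insertI1)
    ultimately have "insert a S1 = insert a S2"
      by blast
    then have "S1 = S2"
      using S assms(2) by (metis insert_ident subset_iff)
    moreover have "P1 = P2"
    proof -
      have "P1 = insert (insert a S1) P1 - {insert a S1}"
        using notin(1) by blast
      also have "\<dots> = insert (insert a S2) P2 - {insert a S2}"
        using eq \<open>insert a S1 = insert a S2\<close> by simp
      also have "\<dots> = P2"
        using notin(2) by blast
      finally show ?thesis .
    qed
    ultimately show "S1 = S2 \<and> P1 = P2" ..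
  qed
next
  show "?h ` ?D = set_partitions (insert a A) (Suc k)"
  proof (intro equalityI subsetI)
    fix Q assume "Q \<in> ?h ` ?D"
    then obtain S P where S: "S \<subseteq> A" and P: "partition_on (A - S) P" "card P = k"
      and Q: "Q = insert (insert a S) P"
      by (auto simp: set_partitions_def)
    have "finite P"
      using P(1) assms(1) finite_elements by blast
    then show "Q \<in> set_partitions (insert a A) (Suc k)"
      using partition_on_insert_block[OF assms(2) S P(1)] P(2) Q by (simp add: set_partitions_def)
  next
    fix Q assume "Q \<in> set_partitions (insert a A) (Suc k)"
    then have Q: "partition_on (insert a A) Q" "card Q = Suc k"
      by (auto simp: set_partitions_def)
    obtain B where B: "B \<in> Q" "a \<in> B"
      using Q(1) by (auto simp: partition_on_def)
    have "B \<subseteq> insert a A"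
      using Q(1) B(1) by (auto simp: partition_on_def)
    have "disjnt B (\<Union>(Q - {B}))"
      using Q(1) B(1) unfolding partition_on_def disjoint_def disjnt_def by blast
    then have "partition_on (insert a A - B) (Q - {B})"
      using partition_on_insert[of B "Q - {B}" "insert a A"] Q(1) B(1) by (simp add: insert_absorb)
    moreover have "insert a A - B = A - (B - {a})"
      using assms(2) B(2) by auto
    moreover have "card (Q - {B}) = k"
      using Q B(1) finite_elements[OF _ Q(1)] assms(1) by simp
    ultimately have "(B - {a}, Q - {B}) \<in> ?D"
      using \<open>B \<subseteq> insert a A\<close> by (auto simp: set_partitions_def)
    moreover have "Q = ?h (B - {a}, Q - {B})"
      using B by (simp add: insert_absorb)
    ultimately show "Q \<in> ?h ` ?D"
      by (rule rev_image_eqI)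
  qed
qed

lemma bell_on_insert:
  assumes "finite A" "a \<notin> A"
  shows "bell_on (insert a A) (Suc k) x = (\<Sum>S\<in>Pow A. x (Suc (card S)) * bell_on (A - S) k x)"
proof -
  have "bell_on (insert a A) (Suc k) x
      = (\<Sum>(S, P)\<in>(SIGMA S:Pow A. set_partitions (A - S) k). \<Prod>B\<in>insert (insert a S) P. x (card B))"
    unfolding bell_on_def
    using sum.reindex_bij_betw[OF bij_betw_set_partitions_insert[OF assms], of "\<lambda>P. \<Prod>B\<in>P. x (card B)"]
    by (simp add: split_def)
  also have "\<dots> = (\<Sum>(S, P)\<in>(SIGMA S:Pow A. set_partitions (A - S) k). x (Suc (card S)) * (\<Prod>B\<in>P. x (card B)))"
  proof (rule sum.cong, simp, clarsimp simp: set_partitions_def)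
    fix S P assume S: "S \<subseteq> A" and P: "partition_on (A - S) P"
    have "finite S" "finite P" "a \<notin> S"
      using S P assms finite_subset finite_elements by blast+
    then show "(\<Prod>B\<in>insert (insert a S) P. x (card B)) = x (Suc (card S)) * (\<Prod>B\<in>P. x (card B))"
      using partition_on_insert_block(2)[OF assms(2) S P] by simp
  qed
  also have "\<dots> = (\<Sum>S\<in>Pow A. x (Suc (card S)) * bell_on (A - S) k x)"
    using assms(1) by (simp add: sum.Sigma[symmetric] finite_set_partitions bell_on_def sum_distrib_left)
  finally show ?thesis .
qed

lemma sum_Pow_card:
  assumes "finite A"
  shows "(\<Sum>S\<in>Pow A. f (card S)) = (\<Sum>i\<le>card A. of_nat (card A choose i) * f i)"
proof -
  have "(\<Sum>S\<in>Pow A. f (card S)) = (\<Sum>i\<le>card A. \<Sum>S\<in>{S. S \<subseteq> A \<and> card S = i}. f (card S))"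
    using sum.group[of "Pow A" "{..card A}" card "\<lambda>S. f (card S)", symmetric] assms
    by (auto intro: card_mono)
  also have "\<dots> = (\<Sum>i\<le>card A. of_nat (card A choose i) * f i)"
    using n_subsets[OF assms] by simp
  finally show ?thesis .
qed

section \<open>The exponential formula\<close>

text \<open>The constant term is \<open>0\<close> rather than \<open>x 0\<close>: partial Bell polynomials never involve \<open>x 0\<close>.\<close>
definition egf :: "(nat \<Rightarrow> 'a::field_char_0) \<Rightarrow> 'a fps" where
  "egf x = Abs_fps (\<lambda>n. if n = 0 then 0 else x n / fact n)"

lemma egf_nth_0 [simp]: "egf x $ 0 = 0"
  by (simp add: egf_def)

lemma fps_deriv_egf_nth: "fps_deriv (egf x) $ n = x (Suc n) / fact n"
  by (simp add: egf_def field_simps del: of_nat_Suc)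

lemma egf_power_Suc_nth:
  "fact (Suc n) * (egf x ^ Suc j) $ Suc n =
     of_nat (Suc j) * (\<Sum>i\<le>n. of_nat (n choose i) * x (Suc i) * (fact (n - i) * (egf x ^ j) $ (n - i)))"
proof -
  have deriv: "of_nat (Suc n) * (egf x ^ Suc j) $ Suc n = of_nat (Suc j) * (\<Sum>i\<le>n. x (Suc i) / fact i * (egf x ^ j) $ (n - i))"
    unfolding Suc_eq_plus1 fps_deriv_nth[symmetric]
    by (simp only: fps_deriv_power diff_add_inverse2 mult.assoc fps_mult_left_const_nth)
       (simp add: fps_mult_nth atLeast0AtMost fps_deriv_egf_nth del: fps_deriv_nth)
  have "fact (Suc n) * (egf x ^ Suc j) $ Suc n = fact n * (of_nat (Suc n) * (egf x ^ Suc j) $ Suc n)"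
    by (simp only: fact_Suc mult_ac)
  also have "\<dots> = of_nat (Suc j) * (\<Sum>i\<le>n. fact n * (x (Suc i) / fact i) * (egf x ^ j) $ (n - i))"
    unfolding deriv by (simp add: sum_distrib_left mult_ac)
  also have "\<dots> = of_nat (Suc j) * (\<Sum>i\<le>n. of_nat (n choose i) * x (Suc i) * (fact (n - i) * (egf x ^ j) $ (n - i)))"
  proof -
    have "fact n * (x (Suc i) / fact i) = of_nat (n choose i) * x (Suc i) * fact (n - i)" if "i \<le> n" for i
      using that by (simp add: binomial_fact)
    then show ?thesis
      by (simp add: mult.assoc)
  qed
  finally show ?thesis .
qed

lemma fact_mult_bell_on:
  fixes x :: "nat \<Rightarrow> 'a::field_char_0"
  assumes "finite A"
  shows "fact k * bell_on A k x = fact (card A) * (egf x ^ k) $ card A"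
  using assms
proof (induction "card A" arbitrary: A k rule: less_induct)
  case less
  show ?case
  proof (cases k)
    case 0
    then show ?thesis using less.prems by (simp add: bell_on_0)
  next
    case (Suc j)
    show ?thesis
    proof (cases "A = {}")
      case True
      then show ?thesis using Suc by (simp add: bell_on_empty_Suc startsby_zero_power)
    next
      case False
      then obtain a A' where A: "A = insert a A'" "a \<notin> A'"
        by (meson Set.set_insert ex_in_conv)
      have "finite A'"
        using less.prems A by simp
      define n where "n = card A'"
      have "fact k * bell_on A k x = of_nat (Suc j) * (\<Sum>S\<in>Pow A'. x (Suc (card S)) * (fact j * bell_on (A' - S) j x))"
        unfolding Suc A(1) bell_on_insert[OF \<open>finite A'\<close> A(2)] by (simp add: sum_distrib_left algebra_simps)
      also have "\<dots> = of_nat (Suc j) * (\<Sum>S\<in>Pow A'. x (Suc (card S)) * (fact (n - card S) * (egf x ^ j) $ (n - card S)))"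
      proof -
        have "fact j * bell_on (A' - S) j x = fact (n - card S) * (egf x ^ j) $ (n - card S)" if "S \<subseteq> A'" for S
        proof -
          have "card (A' - S) = n - card S" "card (A' - S) < card A"
            using that \<open>finite A'\<close> A by (auto simp: n_def card_Diff_subset finite_subset intro: psubset_card_mono)
          then show ?thesis
            using less.hyps[of "A' - S" j] \<open>finite A'\<close> by simp
        qed
        then show ?thesis
          by simp
      qed
      also have "\<dots> = fact (card A) * (egf x ^ k) $ card A"
        using sum_Pow_card[OF \<open>finite A'\<close>, of "\<lambda>i. x (Suc i) * (fact (n - i) * (egf x ^ j) $ (n - i))"]
          egf_power_Suc_nth[where n = n and j = j and x = x] A \<open>finite A'\<close>
        by (simp add: Suc n_def mult.assoc)
      finally show ?thesis .
    qed
  qed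
qed

lemma bell_poly_eq_egf_power: "bell_poly n k x = fact n / fact k * (egf x ^ k) $ n"
  using fact_mult_bell_on[of "{1..n}" k x] by (simp add: bell_poly_eq_bell_on field_simps)

lemma fps_X_mult_deriv_nth: "(fps_X * fps_deriv f) $ n = of_nat n * f $ n"
  for f :: "'a::comm_semiring_1 fps"
  by (cases n) simp_all

lemma fps_X_power2_mult_deriv2_nth:
  "(fps_X ^ 2 * fps_deriv (fps_deriv f)) $ n = of_nat n * (of_nat n - 1) * f $ n"
  for f :: "'a::comm_ring_1 fps"
proof (cases "n < 2")
  case True
  then have "n = 0 \<or> n = 1" by auto
  then show ?thesis by (auto simp: fps_X_power_mult_nth)
next
  case False
  then obtain m where "n = Suc (Suc m)"
    by (metis add_2_eq_Suc le_add_diff_inverse not_less)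
  then show ?thesis
    by (simp add: fps_X_power_mult_nth)
qed

lemma fps_mult_power_nth_eq_0:
  fixes H G :: "'a::comm_semiring_1 fps"
  assumes "H $ 0 = 0" "G $ 0 = 0" "n \<le> k"
  shows "(H * G ^ k) $ n = 0"
proof -
  have "H $ i * (G ^ k) $ (n - i) = 0" if "i \<le> n" for i
    using assms that startsby_zero_power_prefix[OF assms(2), rule_format, of "n - i" k]
    by (cases "i = 0") auto
  then show ?thesis
    by (simp add: fps_mult_nth)
qed

lemma fps_mult_compose_nth:
  fixes H A G :: "'a::comm_ring_1 fps"
  assumes "G $ 0 = 0"
  shows "(H * (A oo G)) $ n = (\<Sum>k\<le>n. A $ k * (H * G ^ k) $ n)"
proof -
  have "(H * (A oo G)) $ n = (\<Sum>i\<le>n. H $ i * (\<Sum>k\<le>n. A $ k * (G ^ k) $ (n - i)))"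
  proof -
    have "(\<Sum>k\<le>n - i. A $ k * (G ^ k) $ (n - i)) = (\<Sum>k\<le>n. A $ k * (G ^ k) $ (n - i))" for i
      by (rule sum.mono_neutral_left) (use startsby_zero_power_prefix[OF assms] in auto)
    then show ?thesis
      by (simp add: fps_mult_nth fps_compose_nth atLeast0AtMost)
  qed
  also have "\<dots> = (\<Sum>i\<le>n. \<Sum>k\<le>n. A $ k * (H $ i * (G ^ k) $ (n - i)))"
    by (simp add: sum_distrib_left mult.left_commute)
  also have "\<dots> = (\<Sum>k\<le>n. \<Sum>i\<le>n. A $ k * (H $ i * (G ^ k) $ (n - i)))"
    by (rule sum.swap)
  also have "\<dots> = (\<Sum>k\<le>n. A $ k * (H * G ^ k) $ n)"
    by (simp add: fps_mult_nth atLeast0AtMost sum_distrib_left)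
  finally show ?thesis .
qed

lemma fps_nth_Suc_eq_deriv_div: "f $ Suc n = fps_deriv f $ n / of_nat (Suc n)"
  for f :: "'a::field_char_0 fps"
  by (simp del: of_nat_Suc)

lemma sum_lessThan_Suc_eq_atMost:
  fixes f :: "nat \<Rightarrow> 'a::comm_monoid_add"
  assumes "f 0 = 0"
  shows "(\<Sum>i<n. f (Suc i)) = (\<Sum>k\<le>n. f k)"
proof -
  have "(\<Sum>k\<le>n. f k) = (\<Sum>k<Suc n. f k)"
    by (simp only: lessThan_Suc_atMost)
  also have "\<dots> = f 0 + (\<Sum>i<n. f (Suc i))"
    by (rule sum.lessThan_Suc_shift)
  finally show ?thesis
    using assms by simp
qed

lemma fps_eq_0_iff_nth_pos:
  assumes "f $ 0 = 0"
  shows "f = 0 \<longleftrightarrow> (\<forall>n\<ge>1. f $ n = 0)"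
proof
  assume "\<forall>n\<ge>1. f $ n = 0"
  then have "f $ n = 0" for n
    using assms by (cases n) auto
  then show "f = 0"
    by (simp add: fps_eq_iff)
qed simp

section \<open>The two recurrences as coefficient identities\<close>

lemma bell_poly_convolution:
  "fact i * (\<Sum>s=1..n. b s / (fact s * fact (n - s)) * bell_poly (n - s) i b *
       (real (Suc i) * real s * (real s - 1) + real n * (real n - 1)))
   = real (Suc i) * (fps_X ^ 2 * fps_deriv (fps_deriv (egf b)) * egf b ^ i) $ n
     + real n * (real n - 1) * (egf b ^ Suc i) $ n"
proof -
  define H where "H = fps_X ^ 2 * fps_deriv (fps_deriv (egf b))"
  have H_nth: "H $ s = real s * (real s - 1) * egf b $ s" for s
    unfolding H_def by (rule fps_X_power2_mult_deriv2_nth)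
  have bell: "fact i * (b s / (fact s * fact (n - s))) * bell_poly (n - s) i b = egf b $ s * (egf b ^ i) $ (n - s)"
    if "s \<in> {1..n}" for s
    using that by (simp add: bell_poly_eq_egf_power egf_def)
  have "fact i * (b s / (fact s * fact (n - s)) * bell_poly (n - s) i b *
         (real (Suc i) * real s * (real s - 1) + real n * (real n - 1)))
      = real (Suc i) * (H $ s * (egf b ^ i) $ (n - s)) + real n * (real n - 1) * (egf b $ s * (egf b ^ i) $ (n - s))"
    if "s \<in> {1..n}" for s
  proof -
    have "fact i * (b s / (fact s * fact (n - s)) * bell_poly (n - s) i b *
         (real (Suc i) * real s * (real s - 1) + real n * (real n - 1)))
      = egf b $ s * (egf b ^ i) $ (n - s) * (real (Suc i) * real s * (real s - 1) + real n * (real n - 1))"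
      by (simp only: mult.assoc[symmetric] bell[OF that])
    then show ?thesis
      by (simp add: H_nth algebra_simps)
  qed
  then have "fact i * (\<Sum>s=1..n. b s / (fact s * fact (n - s)) * bell_poly (n - s) i b *
       (real (Suc i) * real s * (real s - 1) + real n * (real n - 1)))
    = (\<Sum>s=1..n. real (Suc i) * (H $ s * (egf b ^ i) $ (n - s)) + real n * (real n - 1) * (egf b $ s * (egf b ^ i) $ (n - s)))"
    unfolding sum_distrib_left by (rule sum.cong[OF refl])
  also have "\<dots> = real (Suc i) * (\<Sum>s=0..n. H $ s * (egf b ^ i) $ (n - s))
      + real n * (real n - 1) * (\<Sum>s=0..n. egf b $ s * (egf b ^ i) $ (n - s))"
    by (simp add: sum.distrib sum_distrib_left sum.atLeast_Suc_atMost[of 0] H_nth)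
  also have "\<dots> = real (Suc i) * (H * egf b ^ i) $ n + real n * (real n - 1) * (egf b ^ Suc i) $ n"
    by (simp add: fps_mult_nth)
  finally show ?thesis
    by (simp add: H_def)
qed

context
  fixes a :: "nat \<Rightarrow> real" and F :: "real fps"
  assumes F_eq: "F = fps_X * Abs_fps a"
begin

lemma fps_deriv_F_square_nth:
  "(fps_deriv F ^ 2) $ i = (\<Sum>j\<le>i. a j * a (i - j) * real (j + 1) * real (Suc i - j))"
proof -
  have "fps_deriv F $ j = real (Suc j) * a j" for j
    by (simp add: F_eq algebra_simps)
  then show ?thesis
    by (simp add: power2_eq_square fps_mult_nth atLeast0AtMost Suc_diff_le mult_ac)
qed

lemma F_square_nth_Suc_Suc: "(F ^ 2) $ Suc (Suc i) = (\<Sum>j\<le>i. a j * a (i - j))"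
proof -
  have "F ^ 2 = fps_X ^ 2 * Abs_fps a ^ 2"
    by (simp add: F_eq power_mult_distrib)
  then show ?thesis
    by (simp only: fps_X_power_mult_nth) (simp add: power2_eq_square fps_mult_nth atLeast0AtMost)
qed

context
  fixes P :: "real fps"
  assumes P_def: "P = fps_integral0 (fps_deriv F ^ 2)"
begin

lemma P_nth_0: "P $ 0 = 0"
  by (simp add: P_def)

lemma fps_deriv_P: "fps_deriv P = fps_deriv F ^ 2"
  by (simp add: P_def fps_deriv_fps_integral)

lemma recurrence2_term:
  "(\<Sum>j=0..i. a j * a (i - j) * real (j + 1) * real (Suc i - j) * (fact i / (2 * real (Suc i))) *
      (\<Sum>s=1..n. b s / (fact s * fact (n - s)) * bell_poly (n - s) i b *
         (real (Suc i) * real s * (real s - 1) + real n * (real n - 1))))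
   = fps_deriv P $ i * (fps_X ^ 2 * fps_deriv (fps_deriv (egf b)) * egf b ^ i) $ n / 2
     + real n * (real n - 1) / 2 * (P $ Suc i * (egf b ^ Suc i) $ n)"
proof -
  define T where "T = (\<Sum>s=1..n. b s / (fact s * fact (n - s)) * bell_poly (n - s) i b *
         (real (Suc i) * real s * (real s - 1) + real n * (real n - 1)))"
  have "(\<Sum>j=0..i. a j * a (i - j) * real (j + 1) * real (Suc i - j) * (fact i / (2 * real (Suc i))) * T)
      = (\<Sum>j\<le>i. a j * a (i - j) * real (j + 1) * real (Suc i - j)) * (fact i / (2 * real (Suc i))) * T"
    by (simp only: atLeast0AtMost sum_distrib_right)
  also have "\<dots> = fps_deriv P $ i / (2 * real (Suc i)) * (fact i * T)"
    by (simp only: fps_deriv_P fps_deriv_F_square_nth times_divide_eq_right times_divide_eq_left mult_ac)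
  also have "\<dots> = fps_deriv P $ i * (fps_X ^ 2 * fps_deriv (fps_deriv (egf b)) * egf b ^ i) $ n / 2
     + real n * (real n - 1) / 2 * (P $ Suc i * (egf b ^ Suc i) $ n)"
    unfolding T_def bell_poly_convolution fps_nth_Suc_eq_deriv_div[of P]
    by (simp add: field_simps del: fps_deriv_nth power_Suc of_nat_Suc)
  finally show ?thesis
    by (simp only: T_def)
qed

lemma recurrence2_sum_eq:
  "(\<Sum>k=1..n. \<Sum>j=0..k-1. a j * a (k - 1 - j) * real (j + 1) * real (k - j) * (fact (k - 1) / (2 * real k)) *
      (\<Sum>s=1..n. b s / (fact s * fact (n - s)) * bell_poly (n - s) (k - 1) b *
         (real k * real s * (real s - 1) + real n * (real n - 1))))
   = (fps_X ^ 2 * (fps_deriv (fps_deriv (P oo egf b)) + fps_deriv (fps_deriv (egf b)) * (fps_deriv P oo egf b))) $ n / 2"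
proof -
  define H where "H = fps_X ^ 2 * fps_deriv (fps_deriv (egf b))"
  have H_nth_0: "H $ 0 = 0"
    by (simp add: H_def)
  have "(\<Sum>k=1..n. \<Sum>j=0..k-1. a j * a (k - 1 - j) * real (j + 1) * real (k - j) * (fact (k - 1) / (2 * real k)) *
      (\<Sum>s=1..n. b s / (fact s * fact (n - s)) * bell_poly (n - s) (k - 1) b *
         (real k * real s * (real s - 1) + real n * (real n - 1))))
      = (\<Sum>i<n. fps_deriv P $ i * (H * egf b ^ i) $ n / 2
          + real n * (real n - 1) / 2 * (P $ Suc i * (egf b ^ Suc i) $ n))"
    by (rule trans[OF sum.atLeast1_atMost_eq[folded One_nat_def]])
       (simp only: diff_Suc_1 recurrence2_term H_def)
  also have "\<dots> = (\<Sum>i<n. fps_deriv P $ i * (H * egf b ^ i) $ n) / 2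
        + real n * (real n - 1) / 2 * (\<Sum>i<n. P $ Suc i * (egf b ^ Suc i) $ n)"
    by (simp add: sum.distrib sum_divide_distrib sum_distrib_left del: fps_deriv_nth power_Suc)
  also have "(\<Sum>i<n. fps_deriv P $ i * (H * egf b ^ i) $ n) = (H * (fps_deriv P oo egf b)) $ n"
    using fps_mult_power_nth_eq_0[OF H_nth_0 egf_nth_0 order_refl]
    by (simp add: fps_mult_compose_nth lessThan_Suc_atMost[symmetric] del: fps_deriv_nth)
  also have "(\<Sum>i<n. P $ Suc i * (egf b ^ Suc i) $ n) = (P oo egf b) $ n"
    by (subst sum_lessThan_Suc_eq_atMost) (simp_all add: P_nth_0 fps_compose_nth atLeast0AtMost del: power_Suc)
  also have "(H * (fps_deriv P oo egf b)) $ n / 2 + real n * (real n - 1) / 2 * (P oo egf b) $ n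
      = (fps_X ^ 2 * (fps_deriv (fps_deriv (P oo egf b)) + fps_deriv (fps_deriv (egf b)) * (fps_deriv P oo egf b))) $ n / 2"
    by (simp add: H_def distrib_left mult.assoc fps_X_power2_mult_deriv2_nth field_simps del: fps_deriv_nth)
  finally show ?thesis .
qed

context
  fixes Q :: "real fps"
  assumes Q_def: "Q = fps_const (1/2) * fps_deriv (F ^ 2)"
begin

lemma Q_nth: "Q $ 0 = 0" "Q $ Suc i = real (Suc (Suc i)) / 2 * (\<Sum>j\<le>i. a j * a (i - j))"
proof -
  show "Q $ Suc i = real (Suc (Suc i)) / 2 * (\<Sum>j\<le>i. a j * a (i - j))"
    using F_square_nth_Suc_Suc by (simp add: Q_def del: power_Suc)
  show "Q $ 0 = 0"
    by (simp add: Q_def F_eq power2_eq_square)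
qed

lemma recurrence1_term:
  "bell_poly n (Suc i) b * (fact i / 2) *
     (\<Sum>j=0..i. a j * a (i - j) * (2 * real n * real (j + 1) * real (Suc i - j) - real (Suc i) * real (Suc i + 1)))
   = fact n * ((real n * P $ Suc i - Q $ Suc i) * (egf b ^ Suc i) $ n)"
proof -
  have inner: "(\<Sum>j=0..i. a j * a (i - j) * (2 * real n * real (j + 1) * real (Suc i - j) - real (Suc i) * real (Suc i + 1)))
      = 2 * real n * fps_deriv P $ i - real (Suc i) * real (Suc i + 1) * (\<Sum>j\<le>i. a j * a (i - j))"
  proof -
    have summand: "a j * a (i - j) * (2 * real n * real (j + 1) * real (Suc i - j) - real (Suc i) * real (Suc i + 1))
        = 2 * real n * (a j * a (i - j) * real (j + 1) * real (Suc i - j)) - real (Suc i) * real (Suc i + 1) * (a j * a (i - j))"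
      for j
      by (simp only: algebra_simps)
    show ?thesis
      by (simp only: summand fps_deriv_P fps_deriv_F_square_nth atLeast0AtMost sum_subtractf sum_distrib_left)
  qed
  show ?thesis
    unfolding inner bell_poly_eq_egf_power fps_nth_Suc_eq_deriv_div[of P] Q_nth
    by (simp add: field_simps del: fps_deriv_nth power_Suc of_nat_Suc)
qed

lemma recurrence1_sum_eq:
  "(\<Sum>k=1..n. bell_poly n k b * (fact (k - 1) / 2) *
      (\<Sum>j=0..k-1. a j * a (k - 1 - j) * (2 * real n * real (j + 1) * real (k - j) - real k * real (k + 1))))
   = fact n * (fps_X * fps_deriv (P oo egf b) - (Q oo egf b)) $ n"
proof -
  have "(\<Sum>k=1..n. bell_poly n k b * (fact (k - 1) / 2) *
      (\<Sum>j=0..k-1. a j * a (k - 1 - j) * (2 * real n * real (j + 1) * real (k - j) - real k * real (k + 1))))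
      = (\<Sum>i<n. fact n * ((real n * P $ Suc i - Q $ Suc i) * (egf b ^ Suc i) $ n))"
    by (simp only: sum.atLeast1_atMost_eq[folded One_nat_def] diff_Suc_1 recurrence1_term)
  also have "\<dots> = fact n * (\<Sum>k\<le>n. (real n * P $ k - Q $ k) * (egf b ^ k) $ n)"
    by (subst sum_lessThan_Suc_eq_atMost) (simp_all add: sum_distrib_left P_nth_0 Q_nth)
  also have "\<dots> = fact n * (fps_X * fps_deriv (P oo egf b) - (Q oo egf b)) $ n"
    by (simp add: fps_X_mult_deriv_nth fps_compose_nth atLeast0AtMost sum_subtractf sum_distrib_left algebra_simps
        del: fps_deriv_nth fps_X_mult_nth)
  finally show ?thesis .
qed

end

end

end

theorem proposition5p5p2:
  fixes a b :: "nat \<Rightarrow> real" and F G P Q :: "real fps"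
  assumes a0: "a 0 = 1"
    and F_def: "F = Abs_fps (\<lambda>n. if n = 0 then 0 else a (n - 1))"
    and G_def: "G = Abs_fps (\<lambda>n. if n = 0 then 0 else b n / fact n)"
    and Q_def: "Q = fps_const (1/2) * fps_deriv (F ^ 2)"
    and P_def: "P = fps_integral0 ((fps_deriv F) ^ 2)"
  shows "((\<forall>n\<ge>1. 0 = (\<Sum>k=1..n. bell_poly n k b * (fact (k - 1) / 2) *
              (\<Sum>j=0..k-1. a j * a (k - 1 - j) *
                 (2 * real n * real (j + 1) * real (k - j) - real k * real (k + 1)))))
          \<longleftrightarrow> fps_X * fps_deriv (P oo G) - (Q oo G) = 0)
       \<and> ((\<forall>n\<ge>1. 0 = (\<Sum>k=1..n. \<Sum>j=0..k-1. a j * a (k - 1 - j) * real (j + 1) * real (k - j) *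
              (fact (k - 1) / (2 * real k)) *
              (\<Sum>s=1..n. b s / (fact s * fact (n - s)) * bell_poly (n - s) (k - 1) b *
                 (real k * real s * (real s - 1) + real n * (real n - 1)))))
          \<longleftrightarrow> fps_deriv (fps_deriv (P oo G)) + fps_deriv (fps_deriv G) * (fps_deriv P oo G) = 0)"
proof -
  have F: "F = fps_X * Abs_fps a"
    by (simp add: F_def fps_eq_iff)
  have G: "G = egf b"
    by (simp add: G_def egf_def)
  have E1_nth_0: "(fps_X * fps_deriv (P oo G) - (Q oo G)) $ 0 = 0"
    using Q_nth(1)[OF F P_def Q_def] by simp
  have E2_nth_0: "(fps_X ^ 2 * (fps_deriv (fps_deriv (P oo G)) + fps_deriv (fps_deriv G) * (fps_deriv P oo G))) $ 0 = 0"
    by simp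
  show ?thesis
    unfolding recurrence1_sum_eq[OF F P_def Q_def] recurrence2_sum_eq[OF F P_def] G[symmetric]
    using fps_eq_0_iff_nth_pos[OF E1_nth_0] fps_eq_0_iff_nth_pos[OF E2_nth_0]
    by auto
qed

end
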